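(* Let $X$ be the subshift obtained from the marker construction described in the context, and $\mu$ its unique shift-invariant Borel probability measure. Let $j\in\mathbb{N}$ and let $C_1,\dots,C_p$ be unpermuted words in $\mathcal{C}_j$ such that the concatenation $C_1\cdots C_p$ is a subword of some element of $\mathcal{C}_{j+1}$. Then $\mu([C_1]) = \mu([C_1\cdots C_p])$, where $[u] = \{x\in X : x_{[0,|u|)} = u\}$.
   Context: Marker construction. Let $l_1$ be a sufficiently large perfect square and $N_1 = 2^{\sqrt{l_1}}$. Let $\mathcal{C}_1$ be a set of $N_1$ binary words of length $l_1$, each beginning with $001$, such that the word $00$ occurs in each element of $\mathcal{C}_1$ only as its prefix. Inductively, given a set $\mathcal{C}_j$ of $N_j$ distinct words of length $l_j$ with an ordering $\mathcal{C}_j = \{u_1^{(j)},\dots,u_{N_j}^{(j)}\}$, let $P_j = \{2\}\cup\{i^2 : 2 \le i \le \lfloor\sqrt{N_j}\rfloor\}$, and let $\mathcal{C}_{j+1}$ be the set of all words $u^{(j)}_{\pi(1)}\cdots u^{(j)}_{\pi(N_j)}$ where $\pi$ ranges over permutations of $\{1,\dots,N_j\}$ fixing every element outside $P_j$. Thus $N_{j+1} = (\lfloor\sqrt{N_j}\rfloor)!$, $l_{j+1} = l_j N_j$. The ordering of $\mathcal{C}_{j+1}$ is arbitrary except that its first element is $u_1^{(j)}u_2^{(j)}\cdots u_{N_j}^{(j)}$. A word $u_i^{(j)}$ is permuted if $i \in P_j$ and unpermuted otherwise. $X \subset \{0,1\}^{\mathbb{Z}}$ is the set of bi-infinite sequences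 each finite subword of which is a subword of some word in $\bigcup_j \mathcal{C}_j$; it is uniquely ergodic. *)

theory Defs
  imports "HOL-Probability.Probability" "HOL-Library.Sublist"
begin

text \<open>Index set P_N = {2} \<union> {i^2 : 2 \<le> i \<le> floor(sqrt N)} (1-based indices).\<close>
definition Pset :: "nat \<Rightarrow> nat set" where
  "Pset N = {2} \<union> {i^2 | i. 2 \<le> i \<and> i \<le> nat \<lfloor>sqrt (real N)\<rfloor>}"

definition adm_perm :: "nat \<Rightarrow> (nat \<Rightarrow> nat) \<Rightarrow> bool" where
  "adm_perm N \<pi> \<longleftrightarrow> \<pi> permutes {1..N} \<and> (\<forall>i. i \<notin> Pset N \<longrightarrow> \<pi> i = i)"

definition perm_concat :: "'a list list \<Rightarrow> (nat \<Rightarrow> nat) \<Rightarrow> 'a list" where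
  "perm_concat us \<pi> = concat (map (\<lambda>i. us ! (\<pi> i - 1)) [1..<length us + 1])"

text \<open>The marker construction: C j is the ordered list of the words of level j (j \<ge> 1);
  C 0 is irrelevant. l1 is the length of level-1 words. Binary letters: False = 0, True = 1.\<close>
definition marker_construction :: "nat \<Rightarrow> (nat \<Rightarrow> bool list list) \<Rightarrow> bool" where
  "marker_construction l1 C \<longleftrightarrow>
     (\<exists>r. l1 = r^2 \<and> length (C 1) = 2^r) \<and>
     distinct (C 1) \<and>
     (\<forall>w\<in>set (C 1). length w = l1 \<and> take 3 w = [False, False, True] \<and>
        (\<forall>i. i + 1 < length w \<longrightarrow> w ! i = False \<longrightarrow> w ! (i+1) = False \<longrightarrow> i = 0)) \<and>
     (\<forall>j\<ge>1. distinct (C (Suc j)) \<and>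
        set (C (Suc j)) = {perm_concat (C j) \<pi> | \<pi>. adm_perm (length (C j)) \<pi>} \<and>
        C (Suc j) \<noteq> [] \<and> hd (C (Suc j)) = concat (C j))"

definition unpermuted :: "(nat \<Rightarrow> bool list list) \<Rightarrow> nat \<Rightarrow> bool list \<Rightarrow> bool" where
  "unpermuted C j u \<longleftrightarrow>
     (\<exists>i. 1 \<le> i \<and> i \<le> length (C j) \<and> i \<notin> Pset (length (C j)) \<and> u = C j ! (i - 1))"

definition subshift :: "(nat \<Rightarrow> bool list list) \<Rightarrow> (int \<Rightarrow> bool) set" where
  "subshift C = {x. \<forall>a::int. \<forall>n::nat. \<exists>j\<ge>1. \<exists>w\<in>set (C j).
                     sublist (map (\<lambda>k. x (a + int k)) [0..<n]) w}"

definition shift :: "(int \<Rightarrow> bool) \<Rightarrow> (int \<Rightarrow> bool)" where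
  "shift x = (\<lambda>n. x (n + 1))"

definition cyl :: "(int \<Rightarrow> bool) set \<Rightarrow> bool list \<Rightarrow> (int \<Rightarrow> bool) set" where
  "cyl X u = {x \<in> X. \<forall>k<length u. x (int k) = u ! k}"

text \<open>Shift-invariant Borel probability measure on X, viewed as a measure on {0,1}^Z
  (product sigma algebra = Borel sigma algebra of the Cantor space) concentrated on X.\<close>
definition inv_prob_on :: "(int \<Rightarrow> bool) set \<Rightarrow> (int \<Rightarrow> bool) measure \<Rightarrow> bool" where
  "inv_prob_on X M \<longleftrightarrow>
     prob_space M \<and>
     sets M = sets (Pi\<^sub>M UNIV (\<lambda>_::int. count_space (UNIV::bool set))) \<and>
     emeasure M X = 1 \<and>
     (\<forall>A\<in>sets M. emeasure M (shift -` A) = emeasure M A)"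

end

theory Submission
  imports Defs
begin

text \<open>
  The words of each level form a comma-free code: inside any concatenation of level-j words,
  a level-j word occurs only aligned with the block boundaries. At level 1 this is forced by
  the marker 001, which contains the only occurrence of 00 in a level-1 word; it passes from
  level j to level j+1 because every level-(j+1) word starts with the block u_1, whose index
  is never permuted. Hence an unpermuted word u_i seen in a point of X is the block at position
  i of a level-(j+1) word; since the permutation is injective and fixes the unpermuted indices,
  the blocks following it are the unpermuted words u_(i+1), u_(i+2), ... in their natural
  order. So [C_1] and [C_1 ... C_p] coincide already as sets.
\<close>

section \<open>Concatenations of blocks of equal length\<close>

lemma length_concat_uniform:
  "\<forall>x\<in>set xss. length x = L \<Longrightarrow> length (concat xss) = length xss * L"
  by (induction xss) auto

lemma concat_concat: "concat (concat xsss) = concat (map concat xsss)"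
  by (induction xsss) auto

lemma concat_uniform_prefix:
  assumes "\<forall>x\<in>set xss. length x = L" "\<forall>y\<in>set yss. length y = L" "L > 0"
    and "concat xss = concat yss @ b"
  shows "take (length yss) xss = yss"
  using assms
proof (induction yss arbitrary: xss)
  case Nil then show ?case by simp
next
  case (Cons y yss)
  then obtain x xss' where xss: "xss = x # xss'" by (cases xss) auto
  have "x @ concat xss' = y @ concat yss @ b" "length x = length y"
    using Cons.prems xss by simp_all
  then have "x = y" "concat xss' = concat yss @ b" by auto
  with Cons.IH[of xss'] Cons.prems xss show ?case by auto
qed

lemma concat_uniform_block:
  assumes "\<forall>x\<in>set xss. length x = L" "length u = L" "L > 0"
    and "concat xss = concat (take m xss) @ u @ b"
  shows "m < length xss \<and> xss ! m = u"
proof -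
  have "concat xss = concat (take m xss) @ concat (drop m xss)"
    by (metis append_take_drop_id concat_append)
  then have "concat (drop m xss) = concat [u] @ b"
    using assms(4) by simp
  then have take1: "take 1 (drop m xss) = [u]"
    using concat_uniform_prefix[of "drop m xss" L "[u]"] assms(1-3) by (auto dest: in_set_dropD)
  then have m: "m < length xss" by (cases "m < length xss") auto
  then have "drop m xss = xss ! m # drop (Suc m) xss" by (rule Cons_nth_drop_Suc[symmetric])
  with m take1 show ?thesis by simp
qed

lemma concat_uniform_locate:
  assumes "\<forall>x\<in>set xss. length x = N" "m < length xss * N"
  obtains q r where "q < length xss" "r < N"
    "take m (concat xss) = concat (take q xss) @ take r (xss ! q)" "concat xss ! m = xss ! q ! r"
proof -
  have N: "0 < N" using assms(2) by (cases N) auto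
  define q r where "q = m div N" and "r = m mod N"
  have m: "m = q * N + r" "r < N" using N by (simp_all add: q_def r_def)
  have q: "q < length xss" using assms(2) N unfolding q_def by (simp add: div_less_iff_less_mult)
  have split: "concat xss = concat (take q xss) @ xss ! q @ concat (drop (Suc q) xss)"
    using id_take_nth_drop[OF q] by (metis concat.simps(2) concat_append)
  have len: "length (concat (take q xss)) = q * N"
    using assms(1) q by (subst length_concat_uniform[of _ N]) (auto dest: in_set_takeD)
  have "length (xss ! q) = N" using assms(1) q by simp
  with split len m show ?thesis by (intro that[OF q m(2)]) (simp_all add: nth_append)
qed

section \<open>Comma-free codes and the marker 001\<close>

definition comma_free :: "'a list set \<Rightarrow> bool" where
  "comma_free S \<longleftrightarrow>
     (\<forall>ws u a b. set ws \<subseteq> S \<longrightarrow> u \<in> S \<longrightarrow> concat ws = a @ u @ b \<longrightarrow>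
        (\<exists>m. a = concat (take m ws)))"

definition marker_word :: "bool list \<Rightarrow> bool" where
  "marker_word w \<longleftrightarrow> take 3 w = [False, False, True] \<and>
     (\<forall>i. i + 1 < length w \<longrightarrow> w ! i = False \<longrightarrow> w ! (i + 1) = False \<longrightarrow> i = 0)"

lemma marker_word_nth:
  assumes "marker_word w"
  shows "3 \<le> length w" "w ! 0 = False" "w ! 1 = False" "w ! 2 = True"
proof -
  have take3: "take 3 w = [False, False, True]" using assms by (simp add: marker_word_def)
  then have "length (take 3 w) = 3" by simp
  then show "3 \<le> length w" by simp
  have "w ! k = [False, False, True] ! k" if "k < 3" for k
    using take3 that by (metis nth_take)
  from this[of 0] this[of 1] this[of 2] show "w ! 0 = False" "w ! 1 = False" "w ! 2 = True"
    by simp_all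
qed

lemma marker_occurrence_at_boundary:
  assumes "\<forall>w\<in>set ws. marker_word w" "concat ws = a @ [False, False, True] @ b"
  shows "\<exists>m. a = concat (take m ws)"
  using assms
proof (induction ws arbitrary: a)
  case Nil then show ?case by simp
next
  case (Cons v ws)
  have eq: "v @ concat ws = a @ [False, False, True] @ b" using Cons.prems(2) by simp
  consider "length v \<le> length a" | "a = []" | "0 < length a" "length a < length v"
    by fastforce
  then show ?case
  proof cases
    case 1
    then have "a = v @ drop (length v) a" "concat ws = drop (length v) a @ [False, False, True] @ b"
      using arg_cong[OF eq, of "take (length v)"] arg_cong[OF eq, of "drop (length v)"]
      by (simp_all, metis append_take_drop_id)
    moreover obtain m where "drop (length v) a = concat (take m ws)"
      using Cons.IH Cons.prems(1) calculation(2) by auto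
    ultimately have "a = concat (take (Suc m) (v # ws))" by simp
    then show ?thesis ..
  next
    case 2
    then have "a = concat (take 0 (v # ws))" by simp
    then show ?thesis ..
  next
    case 3
    define t where "t = length a"
    have at: "(v @ concat ws) ! t = False" "(v @ concat ws) ! (t + 1) = False"
      "(v @ concat ws) ! (t + 2) = True"
      using eq unfolding t_def by (simp_all add: nth_append)
    have v: "marker_word v" using Cons.prems(1) by simp
    show ?thesis
    proof (cases "t + 1 < length v")
      case True
      then have "v ! t = False" "v ! (t + 1) = False"
        using at(1,2) by (simp_all add: nth_append)
      with v True 3 show ?thesis unfolding marker_word_def t_def by auto
    next
      case False
      then have last: "t + 1 = length v" using 3 t_def by simp
      have "t + 3 \<le> length (v @ concat ws)" using eq t_def by simp
      then obtain v' ws' where ws: "ws = v' # ws'" using last by (cases ws) auto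
      then have "marker_word v'" using Cons.prems(1) by simp
      note v' = marker_word_nth[OF this]
      have "(v @ concat ws) ! (t + 2) = v' ! 1"
        using last ws v'(1) by (simp add: nth_append)
      with at(3) v'(3) show ?thesis by simp
    qed
  qed
qed

lemma comma_free_marker_words:
  assumes "\<forall>w\<in>S. marker_word w"
  shows "comma_free S"
  unfolding comma_free_def
proof (intro allI impI)
  fix ws u a b
  assume ws: "set ws \<subseteq> S" and u: "u \<in> S" and occ: "concat ws = a @ u @ b"
  have "u = [False, False, True] @ drop 3 u"
    using assms u by (metis append_take_drop_id marker_word_def)
  then have "concat ws = a @ [False, False, True] @ (drop 3 u @ b)"
    using occ by (metis append_assoc)
  with ws assms show "\<exists>m. a = concat (take m ws)"
    by (intro marker_occurrence_at_boundary) auto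
qed

section \<open>Words assembled from permuted blocks\<close>

lemma one_notin_Pset: "1 \<notin> Pset N"
proof
  assume "1 \<in> Pset N"
  then obtain i :: nat where "1 = i ^ 2" "2 \<le> i" unfolding Pset_def by auto
  moreover have "2 ^ 2 \<le> i ^ 2" using \<open>2 \<le> i\<close> by (rule power_mono) simp
  ultimately show False by simp
qed

definition perm_blocks :: "'a list list \<Rightarrow> (nat \<Rightarrow> nat) \<Rightarrow> 'a list list" where
  "perm_blocks us \<pi> = map (\<lambda>i. us ! (\<pi> i - 1)) [1..<length us + 1]"

definition perm_words :: "'a list list \<Rightarrow> 'a list set" where
  "perm_words us = {perm_concat us \<pi> | \<pi>. adm_perm (length us) \<pi>}"

text \<open>Indices of \<open>us\<close> are 0-based, while \<open>adm_perm\<close> and \<open>Pset\<close> number blocks from 1.\<close>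

definition unpermuted_word :: "'a list list \<Rightarrow> 'a list \<Rightarrow> bool" where
  "unpermuted_word us u \<longleftrightarrow> (\<exists>i<length us. Suc i \<notin> Pset (length us) \<and> u = us ! i)"

lemma perm_concat_eq_concat_perm_blocks: "perm_concat us \<pi> = concat (perm_blocks us \<pi>)"
  by (simp add: perm_concat_def perm_blocks_def)

lemma length_perm_blocks [simp]: "length (perm_blocks us \<pi>) = length us"
  by (cases "length us") (auto simp: perm_blocks_def)

lemma nth_perm_blocks: "r < length us \<Longrightarrow> perm_blocks us \<pi> ! r = us ! (\<pi> (Suc r) - 1)"
  by (simp add: perm_blocks_def nth_upt del: upt_Suc)

lemma adm_perm_range:
  assumes "adm_perm (length us) \<pi>" "r < length us"
  shows "1 \<le> \<pi> (Suc r)" "\<pi> (Suc r) - 1 < length us"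
proof -
  have "\<pi> permutes {1..length us}" using assms(1) by (simp add: adm_perm_def)
  moreover have "Suc r \<in> {1..length us}" using assms(2) by simp
  ultimately have "\<pi> (Suc r) \<in> {1..length us}" by (metis permutes_in_image)
  then show "1 \<le> \<pi> (Suc r)" "\<pi> (Suc r) - 1 < length us" by auto
qed

lemma set_perm_blocks:
  assumes "adm_perm (length us) \<pi>"
  shows "set (perm_blocks us \<pi>) \<subseteq> set us"
proof
  fix x assume "x \<in> set (perm_blocks us \<pi>)"
  then obtain r where "r < length us" "x = perm_blocks us \<pi> ! r" by (auto simp: in_set_conv_nth)
  with adm_perm_range[OF assms] show "x \<in> set us" by (simp add: nth_perm_blocks)
qed

lemma nth_perm_blocks_unpermuted:
  assumes "adm_perm (length us) \<pi>" "r < length us" "Suc r \<notin> Pset (length us)"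
  shows "perm_blocks us \<pi> ! r = us ! r"
  using assms by (simp add: nth_perm_blocks adm_perm_def)

lemma nth_perm_blocks_eq_unpermuted:
  assumes \<pi>: "adm_perm (length us) \<pi>" and "distinct us"
    and "r < length us" "i < length us" "Suc i \<notin> Pset (length us)"
    and "perm_blocks us \<pi> ! r = us ! i"
  shows "r = i"
proof -
  have "us ! (\<pi> (Suc r) - 1) = us ! i" using assms(3,6) by (simp add: nth_perm_blocks)
  then have "\<pi> (Suc r) = Suc i"
    using adm_perm_range[OF \<pi> assms(3)] assms(2,4) nth_eq_iff_index_eq by fastforce
  also have "Suc i = \<pi> (Suc i)" using \<pi> assms(5) by (simp add: adm_perm_def)
  finally have "\<pi> (Suc r) = \<pi> (Suc i)" .
  moreover have "inj \<pi>" using \<pi> unfolding adm_perm_def by (blast intro: permutes_inj)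
  ultimately show "r = i" by (simp add: inj_eq)
qed

lemma perm_wordsE:
  assumes "w \<in> perm_words us"
  obtains \<pi> where "adm_perm (length us) \<pi>" "w = concat (perm_blocks us \<pi>)"
  using assms by (auto simp: perm_words_def perm_concat_eq_concat_perm_blocks)

lemma length_perm_words:
  assumes "\<forall>u\<in>set us. length u = L" "w \<in> perm_words us"
  shows "length w = length us * L"
proof -
  obtain \<pi> where \<pi>: "adm_perm (length us) \<pi>" and w: "w = concat (perm_blocks us \<pi>)"
    using assms(2) by (rule perm_wordsE)
  have "\<forall>x\<in>set (perm_blocks us \<pi>). length x = L"
    using assms(1) set_perm_blocks[OF \<pi>] by blast
  from length_concat_uniform[OF this] show ?thesis using w by simp
qed

lemma perm_words_choose_perms:
  assumes "set ws \<subseteq> perm_words us"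
  obtains f where "\<forall>w\<in>set ws. adm_perm (length us) (f w) \<and> w = concat (perm_blocks us (f w))"
proof -
  have "\<forall>w\<in>set ws. \<exists>\<pi>. adm_perm (length us) \<pi> \<and> w = concat (perm_blocks us \<pi>)"
    using assms by (metis perm_wordsE subsetD)
  then show ?thesis using that by (metis bchoice)
qed

text \<open>
  Split \<open>ws\<close> into its blocks from \<open>us\<close>: comma-freeness aligns the occurrence of \<open>us ! i\<close>
  with one of them, and that block sits at position \<open>i\<close> of its permutation because the
  permutation is injective and fixes the index of \<open>us ! i\<close>.
\<close>

lemma perm_words_unpermuted_occurrence:
  assumes cf: "comma_free (set us)" and dist: "distinct us"
    and len: "\<forall>u\<in>set us. length u = L" "0 < L"
    and ws: "set ws \<subseteq> perm_words us"
    and i: "i < length us" "Suc i \<notin> Pset (length us)"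
    and occ: "concat ws = a @ us ! i @ b"
  obtains q \<pi> where "q < length ws" "adm_perm (length us) \<pi>" "ws ! q = concat (perm_blocks us \<pi>)"
    "a = concat (take q ws) @ concat (take i (perm_blocks us \<pi>))"
proof -
  obtain f where f: "\<forall>w\<in>set ws. adm_perm (length us) (f w) \<and> w = concat (perm_blocks us (f w))"
    using ws by (rule perm_words_choose_perms)
  define bss where "bss = map (\<lambda>w. perm_blocks us (f w)) ws"
  define vs where "vs = concat bss"
  have map_concat_bss: "map concat bss = ws"
    using f unfolding bss_def by (simp add: map_idI)
  have bss_len: "\<forall>bs\<in>set bss. length bs = length us" unfolding bss_def by simp
  have vs_set: "set vs \<subseteq> set us"
    using f set_perm_blocks unfolding vs_def bss_def by fastforce
  then have vs_len: "\<forall>v\<in>set vs. length v = L" using len(1) by blast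
  have vs_occ: "concat vs = a @ us ! i @ b"
    using occ map_concat_bss unfolding vs_def by (simp add: concat_concat)
  then obtain m where m: "a = concat (take m vs)"
    using cf vs_set i(1) unfolding comma_free_def by (meson nth_mem)
  then have "m < length vs \<and> vs ! m = us ! i"
    using concat_uniform_block[OF vs_len _ len(2)] vs_occ i(1) len(1) by (metis nth_mem)
  moreover have "length vs = length bss * length us"
    using length_concat_uniform[OF bss_len] unfolding vs_def .
  ultimately obtain q r where q: "q < length bss" and "r < length us"
    and split: "take m vs = concat (take q bss) @ take r (bss ! q)" "vs ! m = bss ! q ! r"
    and "vs ! m = us ! i"
    using concat_uniform_locate[OF bss_len] unfolding vs_def by metis
  have bss_q: "bss ! q = perm_blocks us (f (ws ! q))" "adm_perm (length us) (f (ws ! q))"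
    using q f unfolding bss_def by simp_all
  have "r = i"
    using nth_perm_blocks_eq_unpermuted[OF bss_q(2) dist \<open>r < length us\<close> i] split(2)
      \<open>vs ! m = us ! i\<close> bss_q(1) by simp
  have "a = concat (concat (take q bss)) @ concat (take i (bss ! q))"
    using m split(1) \<open>r = i\<close> by simp
  also have "concat (concat (take q bss)) = concat (take q ws)"
    using map_concat_bss by (metis concat_concat take_map)
  finally show ?thesis
    using that[of q "f (ws ! q)"] q bss_q f unfolding bss_def by simp
qed

lemma comma_free_perm_words:
  assumes cf: "comma_free (set us)" and dist: "distinct us"
    and len: "\<forall>u\<in>set us. length u = L" "0 < L" and ne: "us \<noteq> []"
  shows "comma_free (perm_words us)"
  unfolding comma_free_def
proof (intro allI impI)
  fix ws u a b
  assume ws: "set ws \<subseteq> perm_words us" and "u \<in> perm_words us" and occ: "concat ws = a @ u @ b"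
  from \<open>u \<in> perm_words us\<close> obtain \<pi>
    where \<pi>: "adm_perm (length us) \<pi>" and u: "u = concat (perm_blocks us \<pi>)"
    by (rule perm_wordsE)
  have "perm_blocks us \<pi> ! 0 = us ! 0"
    using nth_perm_blocks_unpermuted[OF \<pi>] ne one_notin_Pset by (simp add: One_nat_def)
  then have "perm_blocks us \<pi> = us ! 0 # drop 1 (perm_blocks us \<pi>)"
    using Cons_nth_drop_Suc[of 0 "perm_blocks us \<pi>"] ne by simp
  then have "u = us ! 0 @ concat (drop 1 (perm_blocks us \<pi>))"
    using u by (metis concat.simps(2))
  then have occ0: "concat ws = a @ us ! 0 @ (concat (drop 1 (perm_blocks us \<pi>)) @ b)"
    using occ by simp
  have "0 < length us" "Suc 0 \<notin> Pset (length us)" using ne one_notin_Pset by auto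
  then obtain q \<pi>' where "q < length ws" "adm_perm (length us) \<pi>'"
    "ws ! q = concat (perm_blocks us \<pi>')"
    "a = concat (take q ws) @ concat (take 0 (perm_blocks us \<pi>'))"
    by (rule perm_words_unpermuted_occurrence[OF cf dist len ws _ _ occ0])
  then show "\<exists>m. a = concat (take m ws)" by auto
qed

lemma unpermuted_blocks_in_place:
  assumes \<pi>: "adm_perm (length us) \<pi>" and dist: "distinct us"
    and bound: "i + length Cs \<le> length us"
    and blocks: "take (length Cs) (drop i (perm_blocks us \<pi>)) = Cs"
    and unp: "\<forall>c\<in>set Cs. unpermuted_word us c"
  shows "Cs = take (length Cs) (drop i us)" "\<forall>s<length Cs. Suc (i + s) \<notin> Pset (length us)"
proof -
  have run: "Cs ! s = us ! (i + s) \<and> Suc (i + s) \<notin> Pset (length us)"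
    if s: "s < length Cs" for s
  proof -
    have "Cs ! s = take (length Cs) (drop i (perm_blocks us \<pi>)) ! s" using blocks by simp
    also have "\<dots> = perm_blocks us \<pi> ! (i + s)" using s bound by simp
    finally have "perm_blocks us \<pi> ! (i + s) = Cs ! s" ..
    moreover obtain k where k: "k < length us" "Suc k \<notin> Pset (length us)" "Cs ! s = us ! k"
      using unp s unfolding unpermuted_word_def by (meson nth_mem)
    moreover have "i + s < length us" using s bound by simp
    ultimately have "i + s = k" using nth_perm_blocks_eq_unpermuted[OF \<pi> dist] by simp
    with k show ?thesis by simp
  qed
  then show "Cs = take (length Cs) (drop i us)" using bound by (intro nth_equalityI) auto
  show "\<forall>s<length Cs. Suc (i + s) \<notin> Pset (length us)" using run by blast
qed

lemma unpermuted_factor_of_perm_word: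
  assumes cf: "comma_free (set us)" and dist: "distinct us"
    and len: "\<forall>u\<in>set us. length u = L" "0 < L"
    and w: "w \<in> perm_words us"
    and Cs: "Cs \<noteq> []" "\<forall>c\<in>set Cs. unpermuted_word us c"
    and sub: "sublist (concat Cs) w"
  obtains i where "i + length Cs \<le> length us" "Cs = take (length Cs) (drop i us)"
    "\<forall>s<length Cs. Suc (i + s) \<notin> Pset (length us)"
proof -
  obtain a b where wab: "w = a @ concat Cs @ b" using sub by (auto simp: sublist_def)
  obtain i where i: "i < length us" "Suc i \<notin> Pset (length us)" "hd Cs = us ! i"
    using Cs unfolding unpermuted_word_def by (meson hd_in_set)
  have occ: "concat [w] = a @ us ! i @ (concat (tl Cs) @ b)"
    using wab Cs(1) i(3) by (cases Cs) auto
  have "set [w] \<subseteq> perm_words us" using w by simp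
  then obtain q \<pi> where "q < length [w]" "adm_perm (length us) \<pi>"
    "[w] ! q = concat (perm_blocks us \<pi>)"
    "a = concat (take q [w]) @ concat (take i (perm_blocks us \<pi>))"
    using perm_words_unpermuted_occurrence[OF cf dist len _ i(1,2) occ] by blast
  then have \<pi>: "adm_perm (length us) \<pi>" "w = concat (perm_blocks us \<pi>)"
    and a: "a = concat (take i (perm_blocks us \<pi>))" by simp_all
  define bs where "bs = perm_blocks us \<pi>"
  have "w = concat (take i bs) @ concat (drop i bs)"
    using \<pi>(2) unfolding bs_def by (metis append_take_drop_id concat_append)
  then have drop_eq: "concat (drop i bs) = concat Cs @ b" using wab a unfolding bs_def by simp
  have drop_len: "\<forall>x\<in>set (drop i bs). length x = L"
    using set_perm_blocks[OF \<pi>(1)] len(1) unfolding bs_def by (blast dest: in_set_dropD)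
  have Cs_len: "\<forall>c\<in>set Cs. length c = L"
    using Cs(2) len(1) unfolding unpermuted_word_def by (metis nth_mem)
  have blocks: "take (length Cs) (drop i bs) = Cs"
    using concat_uniform_prefix[OF drop_len Cs_len len(2) drop_eq] .
  then have "length (take (length Cs) (drop i bs)) = length Cs" by simp
  then have "i + length Cs \<le> length us" using i(1) unfolding bs_def by simp
  with unpermuted_blocks_in_place[OF \<pi>(1) dist _ blocks[unfolded bs_def] Cs(2)] show ?thesis
    by (intro that) auto
qed

lemma perm_words_unpermuted_run:
  assumes cf: "comma_free (set us)" and dist: "distinct us"
    and len: "\<forall>u\<in>set us. length u = L" "0 < L"
    and ws: "set ws \<subseteq> perm_words us"
    and run: "m + p \<le> length us" "0 < p" "\<forall>s<p. Suc (m + s) \<notin> Pset (length us)"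
    and occ: "concat ws = a @ y @ b"
    and y: "take (length (us ! m)) y = us ! m" "length y = length (concat (take p (drop m us)))"
  shows "y = concat (take p (drop m us))"
proof -
  have "y = us ! m @ drop (length (us ! m)) y" using y(1) by (metis append_take_drop_id)
  then have "concat ws = a @ us ! m @ (drop (length (us ! m)) y @ b)" using occ by simp
  moreover have "m < length us" "Suc m \<notin> Pset (length us)" using run by auto
  ultimately obtain q \<pi> where q: "q < length ws" and \<pi>: "adm_perm (length us) \<pi>"
    and wq: "ws ! q = concat (perm_blocks us \<pi>)"
    and a: "a = concat (take q ws) @ concat (take m (perm_blocks us \<pi>))"
    using perm_words_unpermuted_occurrence[OF cf dist len ws] by blast
  define bs where "bs = perm_blocks us \<pi>"
  have natural: "take p (drop m bs) = take p (drop m us)"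
    using run nth_perm_blocks_unpermuted[OF \<pi>] unfolding bs_def by (intro nth_equalityI) auto
  have "concat ws = concat (take q ws) @ concat bs @ concat (drop (Suc q) ws)"
    using id_take_nth_drop[OF q] wq unfolding bs_def by (metis concat.simps(2) concat_append)
  also have "concat bs =
      concat (take m bs) @ concat (take p (drop m bs)) @ concat (drop p (drop m bs))"
    by (metis append_take_drop_id concat_append)
  finally have "a @ y @ b =
      a @ concat (take p (drop m us)) @ concat (drop p (drop m bs)) @ concat (drop (Suc q) ws)"
    using occ a natural unfolding bs_def by simp
  then show ?thesis using y(2) by (simp add: append_eq_append_conv)
qed

section \<open>The levels of the marker construction\<close>

lemma unpermuted_iff: "unpermuted C j u \<longleftrightarrow> unpermuted_word (C j) u"
  unfolding unpermuted_def unpermuted_word_def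
proof
  assume "\<exists>i. 1 \<le> i \<and> i \<le> length (C j) \<and> i \<notin> Pset (length (C j)) \<and> u = C j ! (i - 1)"
  then obtain i where "1 \<le> i" "i \<le> length (C j)" "i \<notin> Pset (length (C j))" "u = C j ! (i - 1)"
    by blast
  then show "\<exists>i<length (C j). Suc i \<notin> Pset (length (C j)) \<and> u = C j ! i"
    by (intro exI[of _ "i - 1"]) auto
next
  assume "\<exists>i<length (C j). Suc i \<notin> Pset (length (C j)) \<and> u = C j ! i"
  then obtain i where "i < length (C j)" "Suc i \<notin> Pset (length (C j))" "u = C j ! i" by blast
  then show "\<exists>i. 1 \<le> i \<and> i \<le> length (C j) \<and> i \<notin> Pset (length (C j)) \<and> u = C j ! (i - 1)"
    by (intro exI[of _ "Suc i"]) auto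
qed

lemma marker_construction_level_one:
  assumes "marker_construction l1 C"
  shows "C 1 \<noteq> []" "distinct (C 1)" "\<forall>w\<in>set (C 1). length w = l1 \<and> marker_word w"
  using assms unfolding marker_construction_def marker_word_def by auto

lemma marker_construction_next_level:
  assumes "marker_construction l1 C" "1 \<le> j"
  shows "C (Suc j) \<noteq> []" "distinct (C (Suc j))" "set (C (Suc j)) = perm_words (C j)"
    "hd (C (Suc j)) = concat (C j)"
  using assms unfolding marker_construction_def perm_words_def by auto

lemma marker_construction_level:
  assumes mc: "marker_construction l1 C" and j: "1 \<le> j"
  shows "C j \<noteq> []" "distinct (C j)"
proof -
  obtain k where "j = Suc k" using j by (cases j) auto
  then have "C j \<noteq> [] \<and> distinct (C j)"
    using marker_construction_level_one[OF mc] marker_construction_next_level[OF mc, of k]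
    by (cases k) auto
  then show "C j \<noteq> []" "distinct (C j)" by simp_all
qed

lemma level_uniform_length:
  assumes mc: "marker_construction l1 C"
  shows "1 \<le> j \<Longrightarrow> \<exists>L>0. \<forall>w\<in>set (C j). length w = L"
proof (induction j rule: nat_induct_at_least)
  case base
  obtain w where "w \<in> set (C 1)" using marker_construction_level_one(1)[OF mc] by fastforce
  then have "3 \<le> l1" using marker_construction_level_one(3)[OF mc] marker_word_nth(1) by metis
  with marker_construction_level_one(3)[OF mc] show ?case by (intro exI[of _ l1]) auto
next
  case (Suc j)
  then obtain L where L: "0 < L" "\<forall>w\<in>set (C j). length w = L" by blast
  have "0 < length (C j)" using marker_construction_level(1)[OF mc Suc.hyps] by simp
  with L show ?case
    using length_perm_words[OF L(2)] marker_construction_next_level(3)[OF mc Suc.hyps]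
    by (intro exI[of _ "length (C j) * L"]) auto
qed

lemma level_comma_free:
  assumes mc: "marker_construction l1 C"
  shows "1 \<le> j \<Longrightarrow> comma_free (set (C j))"
proof (induction j rule: nat_induct_at_least)
  case base
  show ?case using marker_construction_level_one(3)[OF mc] by (intro comma_free_marker_words) auto
next
  case (Suc j)
  obtain L where "0 < L" "\<forall>w\<in>set (C j). length w = L"
    using level_uniform_length[OF mc Suc.hyps] by blast
  with Suc.IH marker_construction_level[OF mc Suc.hyps] show ?case
    unfolding marker_construction_next_level(3)[OF mc Suc.hyps] by (intro comma_free_perm_words)
qed

lemma level_word_sublist_higher:
  assumes mc: "marker_construction l1 C" and k: "1 \<le> k" and w: "w \<in> set (C k)"
  shows "k \<le> k' \<Longrightarrow> \<exists>w'\<in>set (C k'). sublist w w'"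
proof (induction k' rule: nat_induct_at_least)
  case base
  show ?case using w by blast
next
  case (Suc n)
  then obtain w' where w': "w' \<in> set (C n)" "sublist w w'" by blast
  have n: "1 \<le> n" using k Suc.hyps by simp
  have "sublist w' (concat (C n))"
    using w'(1) by (metis concat.simps(2) concat_append split_list sublist_appendI)
  then have "sublist w (hd (C (Suc n)))"
    using w'(2) marker_construction_next_level(4)[OF mc n] sublist_order.order_trans by metis
  then show ?case using marker_construction_next_level(1)[OF mc n] by (metis hd_in_set)
qed

lemma concat_of_concats:
  "\<forall>b\<in>set bs. \<exists>ws. set ws \<subseteq> S \<and> b = concat ws \<Longrightarrow> \<exists>ws. set ws \<subseteq> S \<and> concat bs = concat ws"
proof (induction bs)
  case Nil then show ?case by (intro exI[of _ "[]"]) simp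
next
  case (Cons b bs)
  then obtain ws ws' where "set ws \<subseteq> S" "b = concat ws" "set ws' \<subseteq> S" "concat bs = concat ws'"
    by auto
  then show ?case by (intro exI[of _ "ws @ ws'"]) simp
qed

lemma level_word_concat_lower:
  assumes mc: "marker_construction l1 C" and j: "1 \<le> j"
  shows "Suc j \<le> k \<Longrightarrow> W \<in> set (C k) \<Longrightarrow> \<exists>ws. set ws \<subseteq> set (C (Suc j)) \<and> W = concat ws"
proof (induction k arbitrary: W rule: nat_induct_at_least)
  case base
  then show ?case by (intro exI[of _ "[W]"]) simp
next
  case (Suc n)
  have n: "1 \<le> n" using Suc.hyps j by simp
  obtain \<pi> where \<pi>: "adm_perm (length (C n)) \<pi>" and W: "W = concat (perm_blocks (C n) \<pi>)"
    using Suc.prems marker_construction_next_level(3)[OF mc n] by (auto elim: perm_wordsE)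
  have "\<forall>b\<in>set (perm_blocks (C n) \<pi>). \<exists>ws. set ws \<subseteq> set (C (Suc j)) \<and> b = concat ws"
    using Suc.IH set_perm_blocks[OF \<pi>] by blast
  then show ?case using W by (metis concat_of_concats)
qed

lemma subshift_window_in_level:
  assumes mc: "marker_construction l1 C" and j: "1 \<le> j" and x: "x \<in> subshift C"
  obtains ws where "set ws \<subseteq> set (C (Suc j))" "sublist (map (\<lambda>k. x (int k)) [0..<n]) (concat ws)"
proof -
  have "\<exists>k\<ge>1. \<exists>w\<in>set (C k). sublist (map (\<lambda>i. x (0 + int i)) [0..<n]) w"
    using x unfolding subshift_def by blast
  then obtain k w where k: "1 \<le> k" "w \<in> set (C k)" "sublist (map (\<lambda>i. x (int i)) [0..<n]) w"
    by auto
  obtain W where W: "W \<in> set (C (max k (Suc j)))" "sublist w W"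
    using level_word_sublist_higher[OF mc k(1,2) max.cobounded1] by blast
  obtain ws where ws: "set ws \<subseteq> set (C (Suc j))" "W = concat ws"
    using level_word_concat_lower[OF mc j max.cobounded2 W(1)] by blast
  have "sublist (map (\<lambda>i. x (int i)) [0..<n]) (concat ws)"
    using sublist_order.order_trans[OF k(3) W(2)] ws(2) by simp
  with ws(1) show ?thesis by (rule that)
qed

section \<open>Cylinders\<close>

lemma map_upt_eq_iff: "map f [0..<length u] = u \<longleftrightarrow> (\<forall>k<length u. f k = u ! k)"
proof
  assume "map f [0..<length u] = u"
  then show "\<forall>k<length u. f k = u ! k" by (metis add_0 diff_zero length_upt nth_map nth_upt)
next
  assume "\<forall>k<length u. f k = u ! k"
  then show "map f [0..<length u] = u" by (intro nth_equalityI) auto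
qed

lemma mem_cyl_iff: "x \<in> cyl X u \<longleftrightarrow> x \<in> X \<and> map (\<lambda>k. x (int k)) [0..<length u] = u"
  unfolding cyl_def map_upt_eq_iff by blast

lemma cyl_append_subset: "cyl X (u @ v) \<subseteq> cyl X u"
  unfolding cyl_def by (auto simp: nth_append)

lemma cyl_subset_cyl_unpermuted_run:
  assumes mc: "marker_construction l1 C" and j: "1 \<le> j"
    and run: "m + p \<le> length (C j)" "0 < p" "\<forall>s<p. Suc (m + s) \<notin> Pset (length (C j))"
  shows "cyl (subshift C) (C j ! m) \<subseteq> cyl (subshift C) (concat (take p (drop m (C j))))"
proof
  obtain L where L: "\<forall>u\<in>set (C j). length u = L" "0 < L"
    using level_uniform_length[OF mc j] by blast
  have cf: "comma_free (set (C j))" and dist: "distinct (C j)"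
    using level_comma_free[OF mc j] marker_construction_level(2)[OF mc j] by simp_all
  fix x assume "x \<in> cyl (subshift C) (C j ! m)"
  then have x: "x \<in> subshift C" "map (\<lambda>k. x (int k)) [0..<length (C j ! m)] = C j ! m"
    by (simp_all add: mem_cyl_iff)
  define y where "y = map (\<lambda>k. x (int k)) [0..<length (concat (take p (drop m (C j))))]"
  obtain ws where ws: "set ws \<subseteq> set (C (Suc j))" "sublist y (concat ws)"
    using subshift_window_in_level[OF mc j x(1)] unfolding y_def by blast
  then obtain a b where occ: "concat ws = a @ y @ b" by (auto simp: sublist_def)
  have "m < length (C j)" using run(1,2) by simp
  then have "drop m (C j) = C j ! m # drop (Suc m) (C j)" by (rule Cons_nth_drop_Suc[symmetric])
  then have "take p (drop m (C j)) = C j ! m # take (p - 1) (drop (Suc m) (C j))"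
    using run(2) by (cases p) simp_all
  then have "length (C j ! m) \<le> length (concat (take p (drop m (C j))))" by simp
  then have "take (length (C j ! m)) y = C j ! m"
    using x(2) unfolding y_def by (simp add: take_map)
  moreover have "set ws \<subseteq> perm_words (C j)"
    using ws(1) marker_construction_next_level(3)[OF mc j] by simp
  ultimately have "y = concat (take p (drop m (C j)))"
    using perm_words_unpermuted_run[OF cf dist L _ run occ] unfolding y_def by simp
  with x(1) show "x \<in> cyl (subshift C) (concat (take p (drop m (C j))))"
    unfolding y_def by (simp add: mem_cyl_iff)
qed

lemma cyl_hd_eq_cyl_concat_unpermuted:
  assumes mc: "marker_construction l1 C" and j: "1 \<le> j" and ne: "Cs \<noteq> []"
    and unp: "\<forall>c\<in>set Cs. unpermuted C j c"
    and w: "w \<in> set (C (Suc j))" "sublist (concat Cs) w"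
  shows "cyl (subshift C) (hd Cs) = cyl (subshift C) (concat Cs)"
proof
  obtain L where L: "\<forall>u\<in>set (C j). length u = L" "0 < L"
    using level_uniform_length[OF mc j] by blast
  have cf: "comma_free (set (C j))" and dist: "distinct (C j)"
    using level_comma_free[OF mc j] marker_construction_level(2)[OF mc j] by simp_all
  have "w \<in> perm_words (C j)" using w(1) marker_construction_next_level(3)[OF mc j] by simp
  then obtain m where m: "m + length Cs \<le> length (C j)" "Cs = take (length Cs) (drop m (C j))"
    "\<forall>s<length Cs. Suc (m + s) \<notin> Pset (length (C j))"
    using unpermuted_factor_of_perm_word[OF cf dist L] ne unp w(2) unfolding unpermuted_iff
    by blast
  have "hd Cs = Cs ! 0" using ne by (simp add: hd_conv_nth)
  also have "\<dots> = take (length Cs) (drop m (C j)) ! 0" by (rule arg_cong[OF m(2)])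
  also have "\<dots> = C j ! m" using m(1) ne by simp
  finally show "cyl (subshift C) (hd Cs) \<subseteq> cyl (subshift C) (concat Cs)"
    using cyl_subset_cyl_unpermuted_run[OF mc j m(1)] m(2,3) ne by simp
  have "concat Cs = hd Cs @ concat (tl Cs)" using ne by (cases Cs) auto
  then show "cyl (subshift C) (concat Cs) \<subseteq> cyl (subshift C) (hd Cs)"
    using cyl_append_subset by metis
qed

theorem lemma4p3:
  shows "\<exists>L0::nat. \<forall>l1\<ge>L0. \<forall>C. marker_construction l1 C \<longrightarrow>
     (\<forall>M. inv_prob_on (subshift C) M \<longrightarrow>
       (\<forall>(j::nat) (Cs::bool list list).
          j \<ge> 1 \<and> Cs \<noteq> [] \<and> (\<forall>c\<in>set Cs. unpermuted C j c) \<and>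
          (\<exists>w\<in>set (C (Suc j)). sublist (concat Cs) w) \<longrightarrow>
          measure M (cyl (subshift C) (hd Cs)) = measure M (cyl (subshift C) (concat Cs))))"
proof (intro exI[of _ 0] allI impI)
  fix l1 C M j Cs
  assume "marker_construction l1 C"
    and "j \<ge> 1 \<and> Cs \<noteq> [] \<and> (\<forall>c\<in>set Cs. unpermuted C j c) \<and>
      (\<exists>w\<in>set (C (Suc j)). sublist (concat Cs) w)"
  then have "cyl (subshift C) (hd Cs) = cyl (subshift C) (concat Cs)"
    using cyl_hd_eq_cyl_concat_unpermuted by blast
  then show "measure M (cyl (subshift C) (hd Cs)) = measure M (cyl (subshift C) (concat Cs))"
    by simp
qed

end
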